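(* Let $p,q\geq 0$ be integers and let $M$ be a $(p+q)\times(p+q)$ complex matrix with $M=M^*$ and $M^*I_{p,q}M=I_{p,q}$. Then \[ \operatorname{rank}(M-I_{p,q})+\operatorname{rank}(M+I_{p,q})\leq p+q. \]
   Context: $I_{p,q}=\mathrm{diag}\{I_p,-I_q\}$, where $I_p$ is the $p\times p$ identity matrix; $M^*$ denotes the conjugate transpose of $M$. The set of such $M$ is denoted $\mathbf{U}_s(p,q)$ (self-adjoint elements of the pseudo-unitary group $\mathbf{U}(p,q)=\{M\in\mathbf{GL}(p+q,\mathbb{C}):M^*I_{p,q}M=I_{p,q}\}$). *)

theory Defs
  imports "Jordan_Normal_Form.Schur_Decomposition" "Jordan_Normal_Form.DL_Rank"
begin

definition Ipq :: "nat \<Rightarrow> nat \<Rightarrow> complex mat" where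
  "Ipq p q = mat (p + q) (p + q)
     (\<lambda>(i, j). if i = j then (if i < p then 1 else -1) else 0)"

end

(*
  With J = I_{p,q}, the hypotheses say M J M = J and J^2 = 1, whence
  (M - J) J (M + J) = M J M + M - M - J = 0. If A B = 0, the columns of B lie
  in the kernel of A, so rank B <= dim ker A = n - rank A by rank-nullity.
  Finally, multiplying M + J by the invertible J does not change its rank.
*)
theory Submission
  imports Defs "Jordan_Normal_Form.Matrix_Kernel"
begin

lemma mult_mat_vec_linear_map:
  fixes A :: "'a::field mat"
  assumes A: "A \<in> carrier_mat nr nc"
  shows "linear_map class_ring (module_vec TYPE('a) nc) (module_vec TYPE('a) nr) ((*\<^sub>v) A)"
proof -
  interpret NC: vec_space "TYPE('a)" nc .
  interpret NR: vec_space "TYPE('a)" nr .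
  show ?thesis
    by unfold_locales
      (use A in \<open>auto simp: LinearCombinations.module_hom_def mult_add_distrib_mat_vec
         mult_mat_vec module_vec_simps class_ring_simps\<close>)
qed

lemma ker_mult_mat_vec:
  fixes A :: "'a::field mat"
  assumes A: "A \<in> carrier_mat nr nc"
  shows "linear_map.kerT (module_vec TYPE('a) nc) (module_vec TYPE('a) nr) ((*\<^sub>v) A) = mat_kernel A"
proof -
  interpret linear_map class_ring "module_vec TYPE('a) nc" "module_vec TYPE('a) nr" "(*\<^sub>v) A"
    by (rule mult_mat_vec_linear_map[OF A])
  show ?thesis
    using A unfolding ker_def mat_kernel_def by (auto simp: module_vec_simps)
qed

lemma rank_plus_kernel_dim:
  fixes A :: "'a::field mat"
  assumes A: "A \<in> carrier_mat nr nc"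
  shows "vec_space.rank nr A + kernel_dim A = nc"
proof -
  interpret NC: vec_space "TYPE('a)" nc .
  interpret NR: vec_space "TYPE('a)" nr .
  interpret K: kernel nr nc A by unfold_locales (rule A)
  interpret L: linear_map class_ring NC.V NR.V "(*\<^sub>v) A"
    by (rule mult_mat_vec_linear_map[OF A])
  have "L.imT = NR.span (set (cols A))"
    using NR.col_space_eq[OF A] A unfolding NR.col_space_def L.im_def
    by (auto simp: module_vec_simps)
  then show ?thesis
    using L.rank_nullity[OF NC.fin_dim] ker_mult_mat_vec[OF A]
    unfolding NC.dim_is_n NR.rank_def K.kernel_dim by simp
qed

lemma mat_kernel_subspace:
  fixes A :: "'a::field mat"
  assumes A: "A \<in> carrier_mat nr nc"
  shows "VectorSpace.subspace class_ring (mat_kernel A) (module_vec TYPE('a) nc)"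
  using linear_map.kerT_is_subspace[OF mult_mat_vec_linear_map[OF A]]
  unfolding ker_mult_mat_vec[OF A] .

lemma rank_le_kernel_dim_of_mult_eq_zero:
  fixes A B :: "'a::field mat"
  assumes A: "A \<in> carrier_mat nr n" and B: "B \<in> carrier_mat n nc"
    and AB: "A * B = 0\<^sub>m nr nc"
  shows "vec_space.rank n B \<le> kernel_dim A"
proof -
  interpret N: vec_space "TYPE('a)" n .
  interpret K: kernel nr n A by unfold_locales (rule A)
  have cols_in_kernel: "set (cols B) \<subseteq> mat_kernel A"
  proof
    fix v assume "v \<in> set (cols B)"
    then obtain j where j: "j < nc" and v: "v = col B j"
      using B by (auto simp: in_set_conv_nth)
    have "A *\<^sub>v v = col (A * B) j" using col_mult2[OF A B j] v by simp
    then show "v \<in> mat_kernel A"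
      using A B j v AB by (intro mat_kernelI[OF A]) auto
  qed
  have "N.span (set (cols B)) \<subseteq> mat_kernel A"
    using N.span_is_subset[OF cols_in_kernel] mat_kernel_subspace[OF A]
    by (simp add: VectorSpace.subspace_def)
  moreover have "set (cols B) \<subseteq> carrier_vec n"
    using cols_dim[of B] B by simp
  ultimately have "VectorSpace.subspace class_ring (N.span (set (cols B))) K.VK"
    using N.nested_subspaces[OF mat_kernel_subspace[OF A] N.span_is_subspace] by simp
  moreover obtain bas where "finite bas" "K.basis bas"
    using kernel_basis_exists[OF A] by blast
  then have "K.Ker.fin_dim"
    unfolding K.Ker.fin_dim_def K.Ker.basis_def by blast
  ultimately show ?thesis
    using K.Ker.subspace_dim N.fin_dim_span_cols[OF B]
    unfolding N.rank_def K.kernel_dim by simp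
qed

lemma rank_add_rank_le_of_mult_eq_zero:
  fixes A B :: "'a::field mat"
  assumes A: "A \<in> carrier_mat nr n" and "B \<in> carrier_mat n nc"
    and "A * B = 0\<^sub>m nr nc"
  shows "vec_space.rank nr A + vec_space.rank n B \<le> n"
  using rank_le_kernel_dim_of_mult_eq_zero[OF assms] rank_plus_kernel_dim[OF A] by simp

lemma rank_mult_invertible_left:
  fixes A P Q :: "'a::field mat"
  assumes A: "A \<in> carrier_mat n nc" and P: "P \<in> carrier_mat n n" and Q: "Q \<in> carrier_mat n n"
    and QP: "Q * P = 1\<^sub>m n"
  shows "vec_space.rank n (P * A) = vec_space.rank n A"
proof -
  have "kernel_dim (P * A) = kernel_dim A"
    unfolding kernel_dim_def using mat_kernel_mult_eq[OF A P Q QP] P A by simp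
  then show ?thesis
    using rank_plus_kernel_dim[OF A] rank_plus_kernel_dim[of "P * A" n nc] P A by simp
qed

lemma Ipq_carrier: "Ipq p q \<in> carrier_mat (p + q) (p + q)"
  unfolding Ipq_def by simp

lemma Ipq_mult_Ipq: "Ipq p q * Ipq p q = 1\<^sub>m (p + q)"
  by (rule eq_matI)
    (auto simp: Ipq_def scalar_prod_def if_distrib[of "\<lambda>x. _ * x"] cong: if_cong)

lemma minus_mult_plus_eq_zero:
  fixes M J :: "'a::comm_ring_1 mat"
  assumes M: "M \<in> carrier_mat n n" and J: "J \<in> carrier_mat n n"
    and JJ: "J * J = 1\<^sub>m n" and MJM: "M * J * M = J"
  shows "(M - J) * (J * (M + J)) = 0\<^sub>m n n"
proof -
  have JM: "J * M \<in> carrier_mat n n" using J M by simp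
  have JM1: "J * M + 1\<^sub>m n \<in> carrier_mat n n" using JM by simp
  have "(M - J) * (J * (M + J)) = (M - J) * (J * M + 1\<^sub>m n)"
    unfolding mult_add_distrib_mat[OF J M J] JJ ..
  also have "\<dots> = M * (J * M + 1\<^sub>m n) - J * (J * M + 1\<^sub>m n)"
    by (rule minus_mult_distrib_mat[OF M J JM1])
  also have "M * (J * M + 1\<^sub>m n) = J + M"
    unfolding mult_add_distrib_mat[OF M JM one_carrier_mat] assoc_mult_mat[symmetric, OF M J M] MJM
    using M by simp
  also have "J * (J * M + 1\<^sub>m n) = J + M"
    unfolding mult_add_distrib_mat[OF J JM one_carrier_mat] assoc_mult_mat[symmetric, OF J J M] JJ
    using M J by (simp add: comm_add_mat)
  finally show ?thesis using M J by simp
qed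

theorem corollary3p3:
  fixes p q :: nat and M :: "complex mat"
  assumes "M \<in> carrier_mat (p + q) (p + q)"
    and "mat_adjoint M = M"
    and "mat_adjoint M * Ipq p q * M = Ipq p q"
  shows "vec_space.rank (p + q) (M - Ipq p q) + vec_space.rank (p + q) (M + Ipq p q) \<le> p + q"
proof -
  let ?n = "p + q" and ?J = "Ipq p q"
  have M: "M \<in> carrier_mat ?n ?n" and J: "?J \<in> carrier_mat ?n ?n"
    using assms(1) Ipq_carrier by blast+
  have "M * ?J * M = ?J" using assms(2,3) by simp
  then have "(M - ?J) * (?J * (M + ?J)) = 0\<^sub>m ?n ?n"
    by (rule minus_mult_plus_eq_zero[OF M J Ipq_mult_Ipq])
  then have "vec_space.rank ?n (M - ?J) + vec_space.rank ?n (?J * (M + ?J)) \<le> ?n"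
    using M J by (intro rank_add_rank_le_of_mult_eq_zero) auto
  moreover have "vec_space.rank ?n (?J * (M + ?J)) = vec_space.rank ?n (M + ?J)"
    using add_carrier_mat[OF J] by (rule rank_mult_invertible_left[OF _ J J Ipq_mult_Ipq])
  ultimately show ?thesis by simp
qed

end
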